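(* For every process $s$, the set $\mathcal{L}(s)$ of trace distribution formulae satisfied by $s$ is a closed subset of the space of trace distribution formulae of $\mathcal{L}$ with respect to the topology induced by the metric $D$.
   Context: PTS $(\mathcal{S},A,\to)$ with finitely supported distributions; standing assumptions: processes are image-finite and finite. Computations $c=s_0\xrightarrow{a_1}\cdots\xrightarrow{a_n}s_n$ via transitions $s_{i-1}\xrightarrow{a_i}\pi_i$, $s_i\in\mathrm{supp}(\pi_i)$; $\Pr(c)=\prod\pi_i(s_i)$; $|c|=n$; maximal = not a proper prefix of another computation from the same process; $\mathcal{C}_{\max}(z)$. A resolution of $s$ is a PTS $\mathcal{Z}=(Z,A,\to_{\mathcal{Z}})$ with $\mathrm{corr}\colon Z\to\mathcal{S}$ and initial state $z_s$, $\mathrm{corr}(z_s)=s$, such that $z_s$ is in no target support, every other state is in the support of a target of a transition from a different state, every $z\xrightarrow{a}_{\mathcal{Z}}\pi$ is matched by $\mathrm{corr}(z)\xrightarrow{a}\pi'$ with $\pi(z')=\pi'(\mathrm{corr}(z'))$, and each state has at most one outgoing transition; $\mathrm{res}(s)$ the set of resolutions. Logic $\mathcal{L}$: trace formulae $\Phi::=\top\mid\langle a\rangle\Phi$, $\mathrm{depth}(\top)=0$, $\mathrm{depth}(\langle a\rangle\Phi)=1+\mathrm{depth}(\Phi)$; trace distribution formulae $\bigoplus_{i\in I}r_i\Phi_i$ ($I$ finite nonempty, $\Phi_i$ pairwise distinct, $r_i\in(0,1]$, $\sum r_i=1$), identified with probability distributions on trace formulae. $c\models\top$ always; $c\models\langle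 a\rangle\Phi$ iff $c=s\xrightarrow{a}c'$ with $c'\models\Phi$. $s\models\bigoplus_i r_i\Phi_i$ iff some $\mathcal{Z}\in\mathrm{res}(s)$ with initial state $z$ satisfies $\Pr(\{c\in\mathcal{C}_{\max}(z):c\models\Phi_i,|c|=\mathrm{depth}(\Phi_i)\})=r_i$ for all $i$. $\mathcal{L}(s)$ is the set of trace distribution formulae satisfied by $s$. Distance: $d(\Phi_1,\Phi_2)=0$ if $\Phi_1=\Phi_2$, else $1$; $D(\Psi_1,\Psi_2)=\min_\omega\sum\omega(\Phi,\Phi')d(\Phi,\Phi')$ over couplings $\omega$ of $\Psi_1,\Psi_2$ (Kantorovich lifting of $d$); $D$ is a metric on trace distribution formulae. *)

theory Defs
  imports "HOL-Analysis.Analysis" "HOL-Probability.Probability_Mass_Function"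
begin

text \<open>A PTS over states 's and actions 'a is given by its transition relation
  T :: ('s * 'a * 's pmf) set, where (s, a, pi) in T means s --a--> pi.\<close>

type_synonym ('s, 'a) pts = "('s \<times> 'a \<times> 's pmf) set"

fun is_comp :: "('s, 'a) pts \<Rightarrow> 's \<Rightarrow> ('a \<times> 's pmf \<times> 's) list \<Rightarrow> bool" where
  "is_comp T x [] = True"
| "is_comp T x ((a, \<pi>, y) # c) = ((x, a, \<pi>) \<in> T \<and> y \<in> set_pmf \<pi> \<and> is_comp T y c)"

definition comp_prob :: "('a \<times> 's pmf \<times> 's) list \<Rightarrow> real" where
  "comp_prob c = prod_list (map (\<lambda>(a, \<pi>, y). pmf \<pi> y) c)"

definition last_state :: "'s \<Rightarrow> ('a \<times> 's pmf \<times> 's) list \<Rightarrow> 's" where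
  "last_state x c = last (x # map (\<lambda>(a, \<pi>, y). y) c)"

definition max_comps :: "('s, 'a) pts \<Rightarrow> 's \<Rightarrow> ('a \<times> 's pmf \<times> 's) list set" where
  "max_comps T x = {c. is_comp T x c \<and> \<not> (\<exists>d. d \<noteq> [] \<and> is_comp T x (c @ d))}"

definition reach :: "('s, 'a) pts \<Rightarrow> 's \<Rightarrow> 's set" where
  "reach T x = {last_state x c | c. is_comp T x c}"

definition finitely_supported :: "('s, 'a) pts \<Rightarrow> bool" where
  "finitely_supported T \<longleftrightarrow> (\<forall>(x, a, \<pi>) \<in> T. finite (set_pmf \<pi>))"

definition image_finite :: "('s, 'a) pts \<Rightarrow> 's \<Rightarrow> bool" where
  "image_finite T s \<longleftrightarrow> (\<forall>t \<in> reach T s. finite {(a, \<pi>). (t, a, \<pi>) \<in> T})"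

definition finite_process :: "('s, 'a) pts \<Rightarrow> 's \<Rightarrow> bool" where
  "finite_process T s \<longleftrightarrow> finite (reach T s) \<and>
     (\<forall>t \<in> reach T s. \<forall>c. is_comp T t c \<and> c \<noteq> [] \<longrightarrow> last_state t c \<noteq> t)"

record ('s, 'a) resolution =
  rstates :: "nat set"
  rtrans  :: "(nat, 'a) pts"
  corr    :: "nat \<Rightarrow> 's"
  rinit   :: nat

definition is_resolution :: "('s, 'a) pts \<Rightarrow> 's \<Rightarrow> ('s, 'a) resolution \<Rightarrow> bool" where
  "is_resolution T s R \<longleftrightarrow>
     rinit R \<in> rstates R \<and> corr R (rinit R) = s \<and>
     (\<forall>(z, a, \<pi>) \<in> rtrans R. z \<in> rstates R \<and> set_pmf \<pi> \<subseteq> rstates R) \<and>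
     (\<forall>(z, a, \<pi>) \<in> rtrans R. rinit R \<notin> set_pmf \<pi>) \<and>
     (\<forall>z \<in> rstates R - {rinit R}. \<exists>(z', a, \<pi>) \<in> rtrans R. z' \<noteq> z \<and> z \<in> set_pmf \<pi>) \<and>
     (\<forall>(z, a, \<pi>) \<in> rtrans R. \<exists>\<pi>'. (corr R z, a, \<pi>') \<in> T \<and>
          inj_on (corr R) (set_pmf \<pi>) \<and>
          (\<forall>z' \<in> set_pmf \<pi>. pmf \<pi> z' = pmf \<pi>' (corr R z'))) \<and>
     (\<forall>z a \<pi> b \<rho>. (z, a, \<pi>) \<in> rtrans R \<longrightarrow> (z, b, \<rho>) \<in> rtrans R \<longrightarrow> a = b \<and> \<pi> = \<rho>)"

definition res :: "('s, 'a) pts \<Rightarrow> 's \<Rightarrow> ('s, 'a) resolution set" where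
  "res T s = {R. is_resolution T s R}"

datatype 'a tform = Top | Diam 'a "'a tform"

fun depth :: "'a tform \<Rightarrow> nat" where
  "depth Top = 0"
| "depth (Diam a \<Phi>) = Suc (depth \<Phi>)"

fun comp_models :: "('a \<times> 'x pmf \<times> 'x) list \<Rightarrow> 'a tform \<Rightarrow> bool" where
  "comp_models c Top = True"
| "comp_models [] (Diam a \<Phi>) = False"
| "comp_models ((b, \<pi>, y) # c) (Diam a \<Phi>) = (b = a \<and> comp_models c \<Phi>)"

text \<open>Trace distribution formulae are identified with finitely supported
  distributions over trace formulae.\<close>
definition tdf :: "'a tform pmf set" where
  "tdf = {\<Psi>. finite (set_pmf \<Psi>)}"

definition res_prob :: "('s, 'a) resolution \<Rightarrow> 'a tform \<Rightarrow> real" where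
  "res_prob R \<Phi> = (\<Sum>c \<in> {c \<in> max_comps (rtrans R) (rinit R).
                         comp_models c \<Phi> \<and> length c = depth \<Phi>}. comp_prob c)"

definition sat_tdf :: "('s, 'a) pts \<Rightarrow> 's \<Rightarrow> 'a tform pmf \<Rightarrow> bool" where
  "sat_tdf T s \<Psi> \<longleftrightarrow> (\<exists>R \<in> res T s. \<forall>\<Phi> \<in> set_pmf \<Psi>. res_prob R \<Phi> = pmf \<Psi> \<Phi>)"

definition Lsat :: "('s, 'a) pts \<Rightarrow> 's \<Rightarrow> 'a tform pmf set" where
  "Lsat T s = {\<Psi> \<in> tdf. sat_tdf T s \<Psi>}"

definition dtf :: "'a tform \<Rightarrow> 'a tform \<Rightarrow> real" where
  "dtf \<Phi>1 \<Phi>2 = (if \<Phi>1 = \<Phi>2 then 0 else 1)"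

definition couplings :: "'a pmf \<Rightarrow> 'a pmf \<Rightarrow> ('a \<times> 'a) pmf set" where
  "couplings \<Psi>1 \<Psi>2 = {\<omega>. map_pmf fst \<omega> = \<Psi>1 \<and> map_pmf snd \<omega> = \<Psi>2}"

definition kantD :: "'a tform pmf \<Rightarrow> 'a tform pmf \<Rightarrow> real" where
  "kantD \<Psi>1 \<Psi>2 = (INF \<omega> \<in> couplings \<Psi>1 \<Psi>2.
       (\<Sum>p \<in> set_pmf \<omega>. pmf \<omega> p * dtf (fst p) (snd p)))"

end

theory Submission
  imports Defs
begin

text \<open>A finite, image-finite process with finitely supported distributions has only finitely
  many computations. Every resolution computation is mirrored, injectively and with the same
  trace and probability, by a computation of the process; so the weight a satisfied formula
  gives to a trace formula is the probability of some set of computations of the process, and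
  only finitely many trace distribution formulae can be satisfied. The Kantorovich lifting
  \<open>D\<close> of the discrete distance is a metric, and finite sets are closed in metric spaces.\<close>

lemma last_state_Nil [simp]: "last_state x [] = x"
  by (simp add: last_state_def)

lemma last_state_Cons [simp]: "last_state x ((a, \<pi>, y) # c) = last_state y c"
  by (simp add: last_state_def)

lemma last_state_append: "last_state x (c @ d) = last_state (last_state x c) d"
  by (induction c arbitrary: x) auto

lemma is_comp_append: "is_comp T x (c @ d) \<longleftrightarrow> is_comp T x c \<and> is_comp T (last_state x c) d"
  by (induction c arbitrary: x) auto

lemma is_comp_take: "is_comp T x c \<Longrightarrow> is_comp T x (take i c)"
  by (metis append_take_drop_id is_comp_append)

lemma start_in_reach: "s \<in> reach T s"
  unfolding reach_def by (metis (mono_tags) is_comp.simps(1) last_state_Nil mem_Collect_eq)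

lemma last_state_in_reach:
  assumes "t \<in> reach T s" and "is_comp T t d"
  shows "last_state t d \<in> reach T s"
proof -
  obtain c where "is_comp T s c" and "t = last_state s c"
    using assms(1) unfolding reach_def by blast
  hence "is_comp T s (c @ d)" and "last_state s (c @ d) = last_state t d"
    using assms(2) by (simp_all add: is_comp_append last_state_append)
  thus ?thesis unfolding reach_def by (metis (mono_tags, lifting) mem_Collect_eq)
qed

definition reachable_steps :: "('s, 'a) pts \<Rightarrow> 's \<Rightarrow> ('a \<times> 's pmf \<times> 's) set" where
  "reachable_steps T s = {(a, \<pi>, y). \<exists>x \<in> reach T s. (x, a, \<pi>) \<in> T \<and> y \<in> set_pmf \<pi>}"

lemma finite_reachable_steps:
  assumes "finitely_supported T" and "image_finite T s" and "finite (reach T s)"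
  shows "finite (reachable_steps T s)"
proof -
  have "reachable_steps T s =
      (\<Union>x \<in> reach T s. \<Union>(a, \<pi>) \<in> {(a, \<pi>). (x, a, \<pi>) \<in> T}. (\<lambda>y. (a, \<pi>, y)) ` set_pmf \<pi>)"
    unfolding reachable_steps_def by fast
  moreover have "finite (set_pmf \<pi>)" if "(x, a, \<pi>) \<in> T" for x a \<pi>
    using assms(1) that unfolding finitely_supported_def by blast
  ultimately show ?thesis
    using assms(2,3) unfolding image_finite_def by (auto intro!: finite_UN_I)
qed

lemma set_comp_subset_reachable_steps:
  "is_comp T t c \<Longrightarrow> t \<in> reach T s \<Longrightarrow> set c \<subseteq> reachable_steps T s"
proof (induction c arbitrary: t)
  case (Cons st c)
  obtain a \<pi> y where st: "st = (a, \<pi>, y)" by (cases st)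
  have "is_comp T t [(a, \<pi>, y)]" and "is_comp T y c" using Cons.prems st by auto
  hence "y \<in> reach T s" using last_state_in_reach[OF Cons.prems(2)] by fastforce
  thus ?case using Cons st unfolding reachable_steps_def by auto
qed simp

lemma comp_states_distinct:
  assumes "finite_process T s" and "is_comp T s c" and "i < j" and "j \<le> length c"
  shows "last_state s (take i c) \<noteq> last_state s (take j c)"
proof
  define t where "t = last_state s (take i c)"
  define d where "d = take (j - i) (drop i c)"
  assume loop: "t = last_state s (take j c)"
  have take_j: "take j c = take i c @ d"
    using take_add[of i "j - i" c] \<open>i < j\<close> unfolding d_def by simp
  have "is_comp T s (take j c)" using assms(2) by (rule is_comp_take)
  hence "is_comp T s (take i c)" and "is_comp T t d"
    unfolding take_j t_def by (simp_all add: is_comp_append)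
  hence "t \<in> reach T s" unfolding reach_def t_def by blast
  moreover have "d \<noteq> []" using assms(3,4) unfolding d_def by simp
  moreover have "last_state t d = t"
    using loop unfolding take_j t_def by (simp add: last_state_append)
  ultimately show False
    using assms(1) \<open>is_comp T t d\<close> unfolding finite_process_def by blast
qed

lemma length_comp_less_card_reach:
  assumes "finite_process T s" and "is_comp T s c"
  shows "length c < card (reach T s)"
proof -
  define st where "st i = last_state s (take i c)" for i
  have "inj_on st {0..length c}"
    using comp_states_distinct[OF assms] unfolding st_def
    by (intro inj_onI) (metis atLeastAtMost_iff linorder_neq_iff)
  moreover have "st ` {0..length c} \<subseteq> reach T s"
    using is_comp_take[OF assms(2)] unfolding st_def reach_def by blast
  moreover have "finite (reach T s)" using assms(1) unfolding finite_process_def by simp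
  ultimately have "card {0..length c} \<le> card (reach T s)" by (rule card_inj_on_le)
  thus ?thesis by simp
qed

lemma finite_comps:
  assumes "finitely_supported T" and "image_finite T s" and "finite_process T s"
  shows "finite {c. is_comp T s c}"
proof (rule finite_subset)
  show "{c. is_comp T s c} \<subseteq> {c. set c \<subseteq> reachable_steps T s \<and> length c \<le> card (reach T s)}"
    using set_comp_subset_reachable_steps[OF _ start_in_reach, of T s] length_comp_less_card_reach[OF assms(3)]
    by (auto intro: less_imp_le)
  show "finite {c. set c \<subseteq> reachable_steps T s \<and> length c \<le> card (reach T s)}"
    using assms by (intro finite_lists_length_le finite_reachable_steps) (simp_all add: finite_process_def)
qed

definition corr_dist :: "('s, 'a) pts \<Rightarrow> ('s, 'a) resolution \<Rightarrow> nat \<Rightarrow> 'a \<Rightarrow> nat pmf \<Rightarrow> 's pmf" where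
  "corr_dist T R z a \<pi> = (SOME \<pi>'. (corr R z, a, \<pi>') \<in> T \<and>
      (\<forall>z' \<in> set_pmf \<pi>. pmf \<pi> z' = pmf \<pi>' (corr R z')))"

fun corr_comp :: "('s, 'a) pts \<Rightarrow> ('s, 'a) resolution \<Rightarrow> nat \<Rightarrow>
    ('a \<times> nat pmf \<times> nat) list \<Rightarrow> ('a \<times> 's pmf \<times> 's) list" where
  "corr_comp T R z [] = []"
| "corr_comp T R z ((a, \<pi>, y) # c) = (a, corr_dist T R z a \<pi>, corr R y) # corr_comp T R y c"

fun trace_formula :: "('a \<times> 'x pmf \<times> 'x) list \<Rightarrow> 'a tform" where
  "trace_formula [] = Top"
| "trace_formula ((a, \<pi>, y) # c) = Diam a (trace_formula c)"

lemma trace_formula_eqI: "comp_models c \<Phi> \<Longrightarrow> length c = depth \<Phi> \<Longrightarrow> trace_formula c = \<Phi>"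
proof (induction c arbitrary: \<Phi>)
  case Nil thus ?case by (cases \<Phi>) auto
next
  case (Cons st c) thus ?case by (cases \<Phi>; cases st) auto
qed

lemma trace_formula_corr_comp [simp]: "trace_formula (corr_comp T R z c) = trace_formula c"
  by (induction c arbitrary: z) auto

lemma corr_dist:
  assumes "is_resolution T s R" and "(z, a, \<pi>) \<in> rtrans R"
  shows "(corr R z, a, corr_dist T R z a \<pi>) \<in> T"
    and "z' \<in> set_pmf \<pi> \<Longrightarrow> pmf (corr_dist T R z a \<pi>) (corr R z') = pmf \<pi> z'"
proof -
  have "\<exists>\<pi>'. (corr R z, a, \<pi>') \<in> T \<and> (\<forall>z' \<in> set_pmf \<pi>. pmf \<pi> z' = pmf \<pi>' (corr R z'))"
    using assms unfolding is_resolution_def by fast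
  from someI_ex[OF this] show "(corr R z, a, corr_dist T R z a \<pi>) \<in> T"
    and "z' \<in> set_pmf \<pi> \<Longrightarrow> pmf (corr_dist T R z a \<pi>) (corr R z') = pmf \<pi> z'"
    unfolding corr_dist_def by auto
qed

lemma is_comp_corr_comp:
  assumes "is_resolution T s R"
  shows "is_comp (rtrans R) z c \<Longrightarrow> is_comp T (corr R z) (corr_comp T R z c)"
proof (induction c arbitrary: z)
  case (Cons st c)
  obtain a \<pi> y where st: "st = (a, \<pi>, y)" by (cases st)
  have step: "(z, a, \<pi>) \<in> rtrans R" and y: "y \<in> set_pmf \<pi>"
    using Cons.prems st by auto
  have "corr R y \<in> set_pmf (corr_dist T R z a \<pi>)"
    using corr_dist(2)[OF assms step y] y by (simp add: set_pmf_iff)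
  thus ?case using Cons st corr_dist(1)[OF assms step] by simp
qed simp

lemma comp_prob_corr_comp:
  assumes "is_resolution T s R"
  shows "is_comp (rtrans R) z c \<Longrightarrow> comp_prob (corr_comp T R z c) = comp_prob c"
proof (induction c arbitrary: z)
  case (Cons st c)
  obtain a \<pi> y where st: "st = (a, \<pi>, y)" by (cases st)
  thus ?case using Cons corr_dist(2)[OF assms, of z a \<pi> y] by (auto simp: comp_prob_def)
qed (simp add: comp_prob_def)

text \<open>Injectivity rests on the determinism of resolutions and on \<open>corr\<close> being injective on supports.\<close>

lemma corr_comp_inj:
  assumes R: "is_resolution T s R"
  shows "is_comp (rtrans R) z c \<Longrightarrow> is_comp (rtrans R) z c' \<Longrightarrow>
    corr_comp T R z c = corr_comp T R z c' \<Longrightarrow> c = c'"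
proof (induction c arbitrary: z c')
  case Nil thus ?case by (cases c') auto
next
  case (Cons st c)
  obtain a \<pi> y where st: "st = (a, \<pi>, y)" by (cases st)
  obtain b \<rho> x d where c': "c' = (b, \<rho>, x) # d"
    using Cons.prems(3) st by (cases c') auto
  have steps: "(z, a, \<pi>) \<in> rtrans R" "y \<in> set_pmf \<pi>" "(z, b, \<rho>) \<in> rtrans R" "x \<in> set_pmf \<rho>"
    using Cons.prems(1,2) st c' by auto
  hence same: "b = a" "\<rho> = \<pi>" using R unfolding is_resolution_def by blast+
  have "inj_on (corr R) (set_pmf \<pi>)" using R steps(1) unfolding is_resolution_def by fast
  hence "x = y" using Cons.prems(3) steps(2,4) st c' same by (auto dest: inj_onD)
  thus ?case using Cons st c' same by auto
qed

lemma sat_tdf_weight_eq_sum_comp_prob: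
  assumes "sat_tdf T s \<Psi>" and "\<Phi> \<in> set_pmf \<Psi>"
  obtains A where "A \<subseteq> {c. is_comp T s c}" "\<forall>c \<in> A. trace_formula c = \<Phi>"
    "pmf \<Psi> \<Phi> = sum comp_prob A" "A \<noteq> {}"
proof -
  obtain R where R: "is_resolution T s R" and weight: "res_prob R \<Phi> = pmf \<Psi> \<Phi>"
    using assms unfolding sat_tdf_def res_def by auto
  define z where "z = rinit R"
  define B where "B = {c \<in> max_comps (rtrans R) z. comp_models c \<Phi> \<and> length c = depth \<Phi>}"
  have B_comps: "is_comp (rtrans R) z c" if "c \<in> B" for c
    using that unfolding B_def max_comps_def by auto
  have "corr R z = s" using R unfolding is_resolution_def z_def by simp
  hence "corr_comp T R z ` B \<subseteq> {c. is_comp T s c}"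
    using is_comp_corr_comp[OF R] B_comps by auto
  moreover have "\<forall>c \<in> corr_comp T R z ` B. trace_formula c = \<Phi>"
    unfolding B_def by (auto intro: trace_formula_eqI)
  moreover have "pmf \<Psi> \<Phi> = sum comp_prob (corr_comp T R z ` B)"
  proof -
    have "inj_on (corr_comp T R z) B"
      using corr_comp_inj[OF R] B_comps by (meson inj_onI)
    hence "sum comp_prob (corr_comp T R z ` B) = sum (comp_prob \<circ> corr_comp T R z) B"
      by (rule sum.reindex)
    also have "\<dots> = sum comp_prob B"
      using comp_prob_corr_comp[OF R] B_comps by (auto intro: sum.cong)
    finally show ?thesis using weight unfolding res_prob_def B_def z_def by simp
  qed
  moreover have "corr_comp T R z ` B \<noteq> {}"
    using \<open>pmf \<Psi> \<Phi> = sum comp_prob (corr_comp T R z ` B)\<close> assms(2) by (auto simp: set_pmf_iff)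
  ultimately show ?thesis by (rule that)
qed

lemma finite_pmfs_support_values:
  assumes "finite X" and "finite V"
  shows "finite {p. set_pmf p \<subseteq> X \<and> (\<forall>x \<in> X. pmf p x \<in> V)}"
proof (rule finite_imageD)
  let ?P = "{p. set_pmf p \<subseteq> X \<and> (\<forall>x \<in> X. pmf p x \<in> V)}"
  show "finite ((\<lambda>p. restrict (pmf p) X) ` ?P)"
    by (rule finite_subset[OF _ finite_PiE[OF assms(1), of "\<lambda>_. V"]]) (use assms in auto)
  show "inj_on (\<lambda>p. restrict (pmf p) X) ?P"
  proof (rule inj_onI)
    fix p q assume "p \<in> ?P" "q \<in> ?P" and eq: "restrict (pmf p) X = restrict (pmf q) X"
    show "p = q"
    proof (rule pmf_eqI)
      fix x show "pmf p x = pmf q x"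
      proof (cases "x \<in> X")
        case True thus ?thesis using fun_cong[OF eq, of x] by simp
      next
        case False thus ?thesis using \<open>p \<in> ?P\<close> \<open>q \<in> ?P\<close> by (metis (no_types, lifting)
          mem_Collect_eq pmf_eq_0_set_pmf subsetD)
      qed
    qed
  qed
qed

lemma finite_Lsat:
  assumes "finitely_supported T" and "image_finite T s" and "finite_process T s"
  shows "finite (Lsat T s)"
proof -
  define C where "C = {c. is_comp T s c}"
  define V where "V = insert 0 (sum comp_prob ` Pow C)"
  have "finite C" unfolding C_def using finite_comps[OF assms] .
  have "\<Psi> \<in> {p. set_pmf p \<subseteq> trace_formula ` C \<and> (\<forall>\<Phi> \<in> trace_formula ` C. pmf p \<Phi> \<in> V)}"
    if "\<Psi> \<in> Lsat T s" for \<Psi>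
  proof -
    have sat: "sat_tdf T s \<Psi>" using that unfolding Lsat_def by simp
    have "\<Phi> \<in> trace_formula ` C \<and> pmf \<Psi> \<Phi> \<in> V" if \<Phi>: "\<Phi> \<in> set_pmf \<Psi>" for \<Phi>
    proof -
      obtain A where A: "A \<subseteq> C" "\<forall>c \<in> A. trace_formula c = \<Phi>"
          "pmf \<Psi> \<Phi> = sum comp_prob A" "A \<noteq> {}"
        using sat_tdf_weight_eq_sum_comp_prob[OF sat \<Phi>] unfolding C_def by blast
      then obtain c where "c \<in> A" by blast
      hence "\<Phi> \<in> trace_formula ` C" using A(1,2) by (metis image_eqI subsetD)
      moreover have "pmf \<Psi> \<Phi> \<in> V" unfolding V_def using A(1,3) by blast
      ultimately show ?thesis ..
    qed
    moreover have "pmf \<Psi> \<Phi> \<in> V" if "\<Phi> \<notin> set_pmf \<Psi>" for \<Phi>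
      using that unfolding V_def by (simp add: set_pmf_iff)
    ultimately show ?thesis by blast
  qed
  hence "Lsat T s \<subseteq> {p. set_pmf p \<subseteq> trace_formula ` C \<and> (\<forall>\<Phi> \<in> trace_formula ` C. pmf p \<Phi> \<in> V)}"
    by blast
  moreover have "finite V" unfolding V_def using \<open>finite C\<close> by simp
  hence "finite {p. set_pmf p \<subseteq> trace_formula ` C \<and> (\<forall>\<Phi> \<in> trace_formula ` C. pmf p \<Phi> \<in> V)}"
    using \<open>finite C\<close> by (intro finite_pmfs_support_values finite_imageI)
  ultimately show ?thesis by (rule finite_subset)
qed

definition coupling_cost :: "('a tform \<times> 'a tform) pmf \<Rightarrow> real" where
  "coupling_cost \<omega> = (\<Sum>x \<in> set_pmf \<omega>. pmf \<omega> x * dtf (fst x) (snd x))"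

lemma kantD_eq_INF: "kantD p q = (INF \<omega> \<in> couplings p q. coupling_cost \<omega>)"
  unfolding kantD_def coupling_cost_def ..

lemma couplings_nonempty: "couplings p q \<noteq> {}"
  using map_fst_pair_pmf map_snd_pair_pmf unfolding couplings_def by blast

lemma coupling_cost_nonneg: "0 \<le> coupling_cost \<omega>"
  unfolding coupling_cost_def dtf_def by (intro sum_nonneg) auto

lemma kantD_nonneg: "0 \<le> kantD p q"
  unfolding kantD_eq_INF using couplings_nonempty coupling_cost_nonneg by (intro cINF_greatest) auto

lemma kantD_le_coupling_cost: "\<omega> \<in> couplings p q \<Longrightarrow> kantD p q \<le> coupling_cost \<omega>"
  unfolding kantD_eq_INF
  by (rule cINF_lower) (auto intro!: bdd_belowI[of _ 0] coupling_cost_nonneg)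

lemma kantD_self: "kantD p p = 0"
proof -
  have "map_pmf (\<lambda>x. (x, x)) p \<in> couplings p p" unfolding couplings_def by (simp add: map_pmf_comp)
  moreover have "coupling_cost (map_pmf (\<lambda>x. (x, x)) p) = 0"
    unfolding coupling_cost_def dtf_def by (intro sum.neutral) auto
  ultimately show ?thesis using kantD_le_coupling_cost kantD_nonneg by (metis order_antisym)
qed

lemma coupling_cost_swap: "coupling_cost (map_pmf prod.swap \<omega>) = coupling_cost \<omega>"
proof -
  have "coupling_cost (map_pmf prod.swap \<omega>) =
      (\<Sum>x \<in> prod.swap ` set_pmf \<omega>. pmf (map_pmf prod.swap \<omega>) x * dtf (fst x) (snd x))"
    unfolding coupling_cost_def by simp
  also have "\<dots> = (\<Sum>x \<in> set_pmf \<omega>. pmf \<omega> x * dtf (snd x) (fst x))"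
    by (subst sum.reindex) (auto simp: pmf_map_inj')
  also have "\<dots> = coupling_cost \<omega>" unfolding coupling_cost_def dtf_def by (simp add: eq_commute)
  finally show ?thesis .
qed

lemma kantD_commute: "kantD p q = kantD q p"
proof -
  have "kantD q p \<le> kantD p q" for p q :: "'a tform pmf"
    unfolding kantD_eq_INF[of p q]
  proof (rule cINF_greatest[OF couplings_nonempty])
    fix \<omega> assume "\<omega> \<in> couplings p q"
    hence "map_pmf prod.swap \<omega> \<in> couplings q p" unfolding couplings_def by (auto simp: map_pmf_comp)
    thus "kantD q p \<le> coupling_cost \<omega>" using kantD_le_coupling_cost coupling_cost_swap by metis
  qed
  thus ?thesis by (metis order_antisym)
qed

lemma finite_set_pmf_coupling:
  assumes "\<omega> \<in> couplings p q" and "finite (set_pmf p)" and "finite (set_pmf q)"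
  shows "finite (set_pmf \<omega>)"
proof (rule finite_subset)
  show "set_pmf \<omega> \<subseteq> set_pmf p \<times> set_pmf q"
    using assms(1) unfolding couplings_def by force
qed (use assms in simp)

lemma coupling_cost_eq_measure:
  assumes "finite (set_pmf \<omega>)"
  shows "coupling_cost \<omega> = measure \<omega> {x. fst x \<noteq> snd x}"
proof -
  let ?D = "{x :: 'a tform \<times> 'a tform. fst x \<noteq> snd x}"
  have "coupling_cost \<omega> = (\<Sum>x \<in> set_pmf \<omega>. if x \<in> ?D then pmf \<omega> x else 0)"
    unfolding coupling_cost_def dtf_def by (intro sum.cong) auto
  also have "\<dots> = sum (pmf \<omega>) (set_pmf \<omega> \<inter> ?D)"
    using sum.inter_restrict[OF assms, of "pmf \<omega>" ?D] by simp
  also have "\<dots> = measure \<omega> (set_pmf \<omega> \<inter> ?D)" using assms by (simp add: measure_measure_pmf_finite)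
  also have "\<dots> = measure \<omega> ?D" using measure_Int_set_pmf[of \<omega> ?D] by (simp add: Int_commute)
  finally show ?thesis .
qed

lemma kantD_pos:
  assumes p: "p \<in> tdf" and q: "q \<in> tdf" and "p \<noteq> q"
  shows "0 < kantD p q"
proof -
  obtain \<Phi> where "pmf p \<Phi> \<noteq> pmf q \<Phi>" using \<open>p \<noteq> q\<close> by (meson pmf_eqI)
  define e where "e = \<bar>pmf p \<Phi> - pmf q \<Phi>\<bar>"
  have "e \<le> coupling_cost \<omega>" if \<omega>: "\<omega> \<in> couplings p q" for \<omega>
  proof -
    let ?D = "{x :: 'a tform \<times> 'a tform. fst x \<noteq> snd x}"
    have "pmf p \<Phi> = measure \<omega> (fst -` {\<Phi>})" and "pmf q \<Phi> = measure \<omega> (snd -` {\<Phi>})"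
      using \<omega> unfolding couplings_def by (auto simp: pmf_map)
    moreover have "measure \<omega> (fst -` {\<Phi>}) \<le> measure \<omega> ?D + measure \<omega> (snd -` {\<Phi>})"
      by (rule order_trans[OF measure_pmf.finite_measure_mono measure_Un_le]) auto
    moreover have "measure \<omega> (snd -` {\<Phi>}) \<le> measure \<omega> ?D + measure \<omega> (fst -` {\<Phi>})"
      by (rule order_trans[OF measure_pmf.finite_measure_mono measure_Un_le]) auto
    moreover have "coupling_cost \<omega> = measure \<omega> ?D"
      using finite_set_pmf_coupling[OF \<omega>] p q unfolding tdf_def by (simp add: coupling_cost_eq_measure)
    ultimately show ?thesis unfolding e_def by linarith
  qed
  hence "e \<le> kantD p q" unfolding kantD_eq_INF by (intro cINF_greatest[OF couplings_nonempty])
  moreover have "0 < e" using \<open>pmf p \<Phi> \<noteq> pmf q \<Phi>\<close> unfolding e_def by simp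
  ultimately show ?thesis by simp
qed

text \<open>Gluing: draw \<open>(x, y)\<close> from \<open>pq\<close>, then \<open>z\<close> from \<open>qr\<close> conditioned on its first component
  being \<open>y\<close>.\<close>

lemma coupling_glue:
  assumes pq: "pq \<in> couplings p q" and qr: "qr \<in> couplings q r"
  obtains \<nu> where "map_pmf (\<lambda>(x, y, z). (x, y)) \<nu> = pq" and "map_pmf (\<lambda>(x, y, z). (y, z)) \<nu> = qr"
proof
  have pq_snd: "map_pmf snd pq = q" and qr_fst: "map_pmf fst qr = q"
    using pq qr unfolding couplings_def by auto
  define K where "K y = cond_pmf qr {yz. fst yz = y}" for y
  define \<nu> where "\<nu> = bind_pmf pq (\<lambda>(x, y). map_pmf (\<lambda>(y', z). (x, y, z)) (K y))"
  have K_fst: "y = fst yz" if "y \<in> set_pmf q" and "yz \<in> set_pmf (K y)" for y yz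
  proof -
    have "set_pmf qr \<inter> {yz. fst yz = y} \<noteq> {}" using that(1) by (force simp: qr_fst[symmetric])
    thus ?thesis using that(2) unfolding K_def by (simp add: set_cond_pmf)
  qed
  show "map_pmf (\<lambda>(x, y, z). (x, y)) \<nu> = pq"
    unfolding \<nu>_def map_bind_pmf by (simp add: map_pmf_comp case_prod_beta' bind_return_pmf')
  have "map_pmf (\<lambda>(x, y, z). (y, z)) \<nu> = bind_pmf pq (\<lambda>(x, y). K y)"
    unfolding \<nu>_def map_bind_pmf
  proof (intro bind_pmf_cong refl)
    fix xy assume "xy \<in> set_pmf pq"
    hence "snd xy \<in> set_pmf q" by (force simp: pq_snd[symmetric])
    thus "map_pmf (\<lambda>(x, y, z). (y, z)) ((\<lambda>(x, y). map_pmf (\<lambda>(y', z). (x, y, z)) (K y)) xy) =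
        (\<lambda>(x, y). K y) xy"
      using K_fst by (cases xy) (auto simp: map_pmf_comp case_prod_beta' intro!: map_pmf_idI)
  qed
  also have "\<dots> = bind_pmf q K"
    unfolding pq_snd[symmetric] bind_map_pmf by (simp add: case_prod_beta')
  also have "\<dots> = qr"
    unfolding K_def qr_fst[symmetric] bind_map_pmf by (subst bind_cond_pmf_cancel) (auto simp: eq_commute)
  finally show "map_pmf (\<lambda>(x, y, z). (y, z)) \<nu> = qr" .
qed

lemma kantD_triangle:
  assumes p: "p \<in> tdf" and q: "q \<in> tdf" and r: "r \<in> tdf"
  shows "kantD p r \<le> kantD p q + kantD q r"
proof -
  have glued: "kantD p r \<le> coupling_cost pq + coupling_cost qr"
    if pq: "pq \<in> couplings p q" and qr: "qr \<in> couplings q r" for pq qr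
  proof -
    obtain \<nu> where \<nu>12: "map_pmf (\<lambda>(x, y, z). (x, y)) \<nu> = pq" and \<nu>23: "map_pmf (\<lambda>(x, y, z). (y, z)) \<nu> = qr"
      using coupling_glue[OF pq qr] .
    define pr where "pr = map_pmf (\<lambda>(x, y, z). (x, z)) \<nu>"
    have "map_pmf fst pr = map_pmf fst pq" "map_pmf snd pr = map_pmf snd qr"
      unfolding pr_def \<nu>12[symmetric] \<nu>23[symmetric] map_pmf_comp by (simp_all add: case_prod_beta')
    hence pr: "pr \<in> couplings p r" using pq qr unfolding couplings_def by simp
    have fin: "finite (set_pmf \<omega>)" if "\<omega> \<in> couplings p q \<union> couplings q r \<union> couplings p r" for \<omega>
      using that p q r finite_set_pmf_coupling unfolding tdf_def by blast
    have "kantD p r \<le> measure \<nu> {t. fst t \<noteq> snd (snd t)}"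
      using kantD_le_coupling_cost[OF pr] fin[of pr] pr
      by (simp add: coupling_cost_eq_measure pr_def vimage_def case_prod_beta)
    also have "\<dots> \<le> measure \<nu> {t. fst t \<noteq> fst (snd t)} + measure \<nu> {t. fst (snd t) \<noteq> snd (snd t)}"
      by (rule order_trans[OF measure_pmf.finite_measure_mono measure_Un_le]) auto
    also have "\<dots> = coupling_cost pq + coupling_cost qr"
      using fin[of pq] fin[of qr] pq qr
      by (simp add: coupling_cost_eq_measure \<nu>12[symmetric] \<nu>23[symmetric] vimage_def case_prod_beta)
    finally show ?thesis .
  qed
  have "kantD p r - kantD p q \<le> coupling_cost qr" if "qr \<in> couplings q r" for qr
  proof -
    have "kantD p r - coupling_cost qr \<le> kantD p q"
      unfolding kantD_eq_INF[of p q] using glued[OF _ that]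
      by (intro cINF_greatest[OF couplings_nonempty]) (simp add: algebra_simps)
    thus ?thesis by simp
  qed
  hence "kantD p r - kantD p q \<le> kantD q r"
    unfolding kantD_eq_INF[of q r] by (intro cINF_greatest[OF couplings_nonempty])
  thus ?thesis by simp
qed

lemma Metric_space_kantD: "Metric_space tdf kantD"
proof
  fix p q r :: "'a tform pmf"
  show "0 \<le> kantD p q" by (rule kantD_nonneg)
  show "kantD p q = kantD q p" by (rule kantD_commute)
  show "kantD p q = 0 \<longleftrightarrow> p = q" if "p \<in> tdf" "q \<in> tdf"
    using that kantD_pos kantD_self by (metis less_irrefl)
  show "kantD p r \<le> kantD p q + kantD q r" if "p \<in> tdf" "q \<in> tdf" "r \<in> tdf"
    using that by (rule kantD_triangle)
qed

theorem proposition15: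
  fixes T :: "('s, 'a) pts" and s :: 's
  assumes "finitely_supported T"
    and "image_finite T s"
    and "finite_process T s"
  shows "closedin (Metric_space.mtopology tdf kantD) (Lsat T s)"
proof -
  interpret Metric_space "tdf :: 'a tform pmf set" kantD by (rule Metric_space_kantD)
  have "t1_space mtopology" by (rule Hausdorff_imp_t1_space[OF Hausdorff_space_mtopology])
  moreover have "Lsat T s \<subseteq> topspace mtopology" unfolding Lsat_def by auto
  ultimately show ?thesis using finite_Lsat[OF assms] by (simp add: t1_space_closedin_finite)
qed

end
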